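(* Let $F$ be a field of characteristic different from $2$, let $a_1,a_2\in F^\times$ be such that $E=F(\sqrt{a_1},\sqrt{a_2})$ is Galois over $F$ with $G=\mathrm{Gal}(E/F)\cong\mathbb Z/2\mathbb Z\times\mathbb Z/2\mathbb Z$, and let $\sigma_1,\sigma_2\in G$ be the generators with $\sigma_1(\sqrt{a_1})=\sqrt{a_1}$, $\sigma_1(\sqrt{a_2})=-\sqrt{a_2}$, $\sigma_2(\sqrt{a_2})=\sqrt{a_2}$, $\sigma_2(\sqrt{a_1})=-\sqrt{a_1}$. Then, in the $\mathbb Z[G]$-module $E^\times$, \[\ker(1-\sigma_1)(1-\sigma_2)=\ker(1-\sigma_1)\cdot\ker(1-\sigma_2).\]
   Context: $E^\times$ is a $\mathbb Z[G]$-module via $(\sum_g c_g g)\cdot\gamma=\prod_g g(\gamma)^{c_g}$. Thus $\ker(1-\sigma_i)=\{e\in E^\times: e/\sigma_i(e)=1\}$ and $\ker(1-\sigma_1)(1-\sigma_2)=\{e\in E^\times: e\,\sigma_1\sigma_2(e)=\sigma_1(e)\,\sigma_2(e)\}$. For subsets $A,B$, $A\cdot B=\{ab:a\in A,b\in B\}$. *)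

theory Defs
  imports "HOL-Algebra.Algebra" "HOL-Library.FuncSet"
begin

text \<open>Fields are modelled as subsets of an ambient field type 'a.\<close>

definition is_subfield :: "'a::field set \<Rightarrow> bool" where
  "is_subfield K \<longleftrightarrow> 0 \<in> K \<and> 1 \<in> K \<and>
     (\<forall>x\<in>K. \<forall>y\<in>K. x + y \<in> K \<and> x * y \<in> K) \<and>
     (\<forall>x\<in>K. - x \<in> K \<and> inverse x \<in> K)"

definition adjoin :: "'a::field set \<Rightarrow> 'a set \<Rightarrow> 'a set" where
  "adjoin F S = \<Inter> {K. is_subfield K \<and> F \<subseteq> K \<and> S \<subseteq> K}"

definition Gal_set :: "'a::field set \<Rightarrow> 'a set \<Rightarrow> ('a \<Rightarrow> 'a) set" where
  "Gal_set E F = {\<sigma> \<in> E \<rightarrow>\<^sub>E E. bij_betw \<sigma> E E \<and>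
      (\<forall>x\<in>E. \<forall>y\<in>E. \<sigma> (x + y) = \<sigma> x + \<sigma> y \<and> \<sigma> (x * y) = \<sigma> x * \<sigma> y) \<and>
      \<sigma> 1 = 1 \<and> (\<forall>x\<in>F. \<sigma> x = x)}"

definition Gal :: "'a::field set \<Rightarrow> 'a set \<Rightarrow> ('a \<Rightarrow> 'a) monoid" where
  "Gal E F = \<lparr>carrier = Gal_set E F, monoid.mult = (\<lambda>\<sigma> \<tau>. compose E \<sigma> \<tau>),
              one = (\<lambda>x\<in>E. x)\<rparr>"

definition is_galois :: "'a::field set \<Rightarrow> 'a set \<Rightarrow> bool" where
  "is_galois E F \<longleftrightarrow> F \<subseteq> E \<and> {x \<in> E. \<forall>\<sigma> \<in> Gal_set E F. \<sigma> x = x} = F"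

end

theory Submission
  imports Defs
begin

text \<open>
  If \<open>e \<cdot> \<sigma>\<^sub>1\<sigma>\<^sub>2(e) = \<sigma>\<^sub>1(e) \<cdot> \<sigma>\<^sub>2(e)\<close>, then \<open>w = e / \<sigma>\<^sub>2(e)\<close> is fixed by \<open>\<sigma>\<^sub>1\<close> and
  \<open>\<sigma>\<^sub>2(w) = 1 / w\<close>. If \<open>w \<noteq> -1\<close>, Hilbert 90 for the involution \<open>\<sigma>\<^sub>2\<close> gives
  \<open>w = x / \<sigma>\<^sub>2(x)\<close> with \<open>x = 1 + w\<close>, which is \<open>\<sigma>\<^sub>1\<close>-fixed, and \<open>e / x\<close> is \<open>\<sigma>\<^sub>2\<close>-fixed.
  If \<open>w = -1\<close>, i.e. \<open>\<sigma>\<^sub>2(e) = -e\<close>, the element \<open>\<surd>a\<^sub>1\<close> (fixed by \<open>\<sigma>\<^sub>1\<close>, negated by \<open>\<sigma>\<^sub>2\<close>)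
  takes the place of \<open>x\<close>. The reverse inclusion only needs \<open>\<sigma>\<^sub>1\<sigma>\<^sub>2 = \<sigma>\<^sub>2\<sigma>\<^sub>1\<close>.

  Of the hypotheses on the extension, only the consequences of \<open>G \<cong> \<int>/2 \<times> \<int>/2\<close> that
  \<open>\<sigma>\<^sub>2\<close> is an involution commuting with \<open>\<sigma>\<^sub>1\<close> are used.
\<close>

lemma is_subfield_closed:
  assumes "is_subfield E"
  shows subfield_0: "0 \<in> E" and subfield_1: "1 \<in> E"
    and subfield_add: "x \<in> E \<Longrightarrow> y \<in> E \<Longrightarrow> x + y \<in> E"
    and subfield_mult: "x \<in> E \<Longrightarrow> y \<in> E \<Longrightarrow> x * y \<in> E"
    and subfield_divide: "x \<in> E \<Longrightarrow> y \<in> E \<Longrightarrow> x / y \<in> E"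
  using assms unfolding is_subfield_def by (auto simp: divide_inverse)

lemma is_subfield_adjoin: "is_subfield (adjoin F S)"
  unfolding adjoin_def is_subfield_def by auto

lemma adjoin_superset: "F \<subseteq> adjoin F S" "S \<subseteq> adjoin F S"
  unfolding adjoin_def by auto

lemma Gal_setD:
  assumes "\<sigma> \<in> Gal_set E F"
  shows Gal_set_closed: "x \<in> E \<Longrightarrow> \<sigma> x \<in> E"
    and Gal_set_add: "x \<in> E \<Longrightarrow> y \<in> E \<Longrightarrow> \<sigma> (x + y) = \<sigma> x + \<sigma> y"
    and Gal_set_mult: "x \<in> E \<Longrightarrow> y \<in> E \<Longrightarrow> \<sigma> (x * y) = \<sigma> x * \<sigma> y"
    and Gal_set_1: "\<sigma> 1 = 1"
    and Gal_set_inj_on: "inj_on \<sigma> E"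
  using assms unfolding Gal_set_def bij_betw_def by auto

lemma Gal_set_0:
  assumes "is_subfield E" "\<sigma> \<in> Gal_set E F"
  shows "\<sigma> 0 = 0"
proof -
  have "\<sigma> 0 + \<sigma> 0 = \<sigma> 0 + 0"
    using Gal_set_add[OF assms(2) subfield_0 subfield_0] assms(1) by simp
  then show ?thesis by (rule add_left_imp_eq)
qed

lemma Gal_set_eq_0_iff:
  assumes "is_subfield E" "\<sigma> \<in> Gal_set E F" "x \<in> E"
  shows "\<sigma> x = 0 \<longleftrightarrow> x = 0"
  using Gal_set_inj_on[OF assms(2)] Gal_set_0[OF assms(1,2)] subfield_0[OF assms(1)] assms(3)
  by (metis inj_on_eq_iff)

lemma Gal_set_divide:
  assumes "is_subfield E" "\<sigma> \<in> Gal_set E F" "x \<in> E" "y \<in> E"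
  shows "\<sigma> (x / y) = \<sigma> x / \<sigma> y"
proof (cases "y = 0")
  case True
  then show ?thesis using Gal_set_0[OF assms(1,2)] by simp
next
  case False
  have "\<sigma> (x / y) * \<sigma> y = \<sigma> x"
    using Gal_set_mult[OF assms(2) subfield_divide[OF assms(1,3,4)] assms(4)] False by simp
  moreover have "\<sigma> y \<noteq> 0" using Gal_set_eq_0_iff[OF assms(1,2,4)] False by simp
  ultimately show ?thesis by (simp add: field_simps)
qed

lemma Gal_set_fixed_product_in_kernel:
  assumes "\<sigma>1 \<in> Gal_set E F" "\<sigma>2 \<in> Gal_set E F"
    and commute: "\<sigma>1 (\<sigma>2 x) = \<sigma>2 (\<sigma>1 x)"
    and x: "x \<in> E" "\<sigma>1 x = x" and y: "y \<in> E" "\<sigma>2 y = y"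
  shows "(x * y) * \<sigma>1 (\<sigma>2 (x * y)) = \<sigma>1 (x * y) * \<sigma>2 (x * y)"
proof -
  have "\<sigma>1 (\<sigma>2 (x * y)) = \<sigma>2 x * \<sigma>1 y"
    using assms by (simp add: Gal_set_mult Gal_set_closed)
  moreover have "\<sigma>1 (x * y) = x * \<sigma>1 y" "\<sigma>2 (x * y) = \<sigma>2 x * y"
    using assms by (simp_all add: Gal_set_mult)
  ultimately show ?thesis by (simp add: ac_simps)
qed

lemma Gal_set_kernel_decompose:
  assumes E: "is_subfield E" and s1: "\<sigma>1 \<in> Gal_set E F" and s2: "\<sigma>2 \<in> Gal_set E F"
    and invol: "\<And>x. x \<in> E \<Longrightarrow> \<sigma>2 (\<sigma>2 x) = x"
    and r: "r \<in> E" "r \<noteq> 0" "\<sigma>1 r = r" "\<sigma>2 r = - r"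
    and e: "e \<in> E" "e \<noteq> 0" and ker: "e * \<sigma>1 (\<sigma>2 e) = \<sigma>1 e * \<sigma>2 e"
  obtains x y where "e = x * y" "x \<in> E" "x \<noteq> 0" "\<sigma>1 x = x" "y \<in> E" "y \<noteq> 0" "\<sigma>2 y = y"
proof -
  define w where "w = e / \<sigma>2 e"
  have s2e: "\<sigma>2 e \<in> E" "\<sigma>2 e \<noteq> 0"
    using Gal_set_closed[OF s2 e(1)] Gal_set_eq_0_iff[OF E s2 e(1)] e by auto
  have wE: "w \<in> E" unfolding w_def using E e s2e by (simp add: subfield_divide)
  have w0: "w \<noteq> 0" unfolding w_def using e s2e by simp
  have w1: "\<sigma>1 w = w"
    using ker s2e e Gal_set_eq_0_iff[OF E s1 s2e(1)]
    unfolding w_def Gal_set_divide[OF E s1 e(1) s2e(1)] by (simp add: field_simps)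
  have w2: "\<sigma>2 w = 1 / w"
    unfolding w_def Gal_set_divide[OF E s2 e(1) s2e(1)] invol[OF e(1)] by simp
  show ?thesis
  proof (cases "w = -1")
    case True
    then have "\<sigma>2 e = - e" using s2e unfolding w_def by (metis divide_eq_minus_1_iff minus_minus)
    then have "\<sigma>2 (e / r) = e / r"
      using Gal_set_divide[OF E s2 e(1) r(1)] r by simp
    then show ?thesis
      using that[of r "e / r"] r e E by (simp add: subfield_divide)
  next
    case False
    define x where "x = 1 + w"
    have xE: "x \<in> E" unfolding x_def using E wE by (simp add: subfield_1 subfield_add)
    have x0: "x \<noteq> 0" using False unfolding x_def by (metis add_eq_0_iff)
    have x1: "\<sigma>1 x = x"
      unfolding x_def using Gal_set_add[OF s1 subfield_1[OF E] wE] Gal_set_1[OF s1] w1 by simp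
    have x2: "\<sigma>2 x = x / w"
      unfolding x_def using Gal_set_add[OF s2 subfield_1[OF E] wE] Gal_set_1[OF s2] w2 w0
      by (simp add: field_simps)
    have "\<sigma>2 (e / x) = e / x"
      using Gal_set_divide[OF E s2 e(1) xE] x2 x0 s2e unfolding w_def by (simp add: field_simps)
    then show ?thesis
      using that[of x "e / x"] xE x0 x1 e E by (simp add: subfield_divide)
  qed
qed

lemma Gal_set_kernel_eq_product:
  assumes E: "is_subfield E" and s1: "\<sigma>1 \<in> Gal_set E F" and s2: "\<sigma>2 \<in> Gal_set E F"
    and invol: "\<And>x. x \<in> E \<Longrightarrow> \<sigma>2 (\<sigma>2 x) = x"
    and commute: "\<And>x. x \<in> E \<Longrightarrow> \<sigma>1 (\<sigma>2 x) = \<sigma>2 (\<sigma>1 x)"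
    and r: "r \<in> E" "r \<noteq> 0" "\<sigma>1 r = r" "\<sigma>2 r = - r"
  shows "{e \<in> E - {0}. e * \<sigma>1 (\<sigma>2 e) = \<sigma>1 e * \<sigma>2 e}
       = {x * y | x y. x \<in> E - {0} \<and> x / \<sigma>1 x = 1 \<and> y \<in> E - {0} \<and> y / \<sigma>2 y = 1}"
proof -
  have fixed_iff: "x / \<sigma> x = 1 \<longleftrightarrow> \<sigma> x = x" if "\<sigma> \<in> Gal_set E F" "x \<in> E - {0}" for \<sigma> x
    using Gal_set_eq_0_iff[OF E that(1)] that(2) by auto
  show ?thesis
  proof (intro equalityI subsetI)
    fix e assume "e \<in> {e \<in> E - {0}. e * \<sigma>1 (\<sigma>2 e) = \<sigma>1 e * \<sigma>2 e}"
    then obtain x y where "e = x * y" "x \<in> E - {0}" "\<sigma>1 x = x" "y \<in> E - {0}" "\<sigma>2 y = y"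
      using Gal_set_kernel_decompose[OF E s1 s2 invol r] by blast
    then show "e \<in> {x * y | x y. x \<in> E - {0} \<and> x / \<sigma>1 x = 1 \<and> y \<in> E - {0} \<and> y / \<sigma>2 y = 1}"
      using fixed_iff[OF s1] fixed_iff[OF s2] by blast
  next
    fix e assume "e \<in> {x * y | x y. x \<in> E - {0} \<and> x / \<sigma>1 x = 1 \<and> y \<in> E - {0} \<and> y / \<sigma>2 y = 1}"
    then obtain x y where "e = x * y" "x \<in> E - {0}" "\<sigma>1 x = x" "y \<in> E - {0}" "\<sigma>2 y = y"
      using fixed_iff[OF s1] fixed_iff[OF s2] by blast
    then show "e \<in> {e \<in> E - {0}. e * \<sigma>1 (\<sigma>2 e) = \<sigma>1 e * \<sigma>2 e}"
      using Gal_set_fixed_product_in_kernel[OF s1 s2 commute] E by (simp add: subfield_mult)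
  qed
qed

lemma Gal_mult_apply: "x \<in> E \<Longrightarrow> (\<sigma> \<otimes>\<^bsub>Gal E F\<^esub> \<tau>) x = \<sigma> (\<tau> x)"
  by (simp add: Gal_def compose_eq)

lemma Gal_one_apply: "x \<in> E \<Longrightarrow> \<one>\<^bsub>Gal E F\<^esub> x = x"
  by (simp add: Gal_def)

lemma monoid_Gal:
  assumes E: "is_subfield E" and FE: "F \<subseteq> E"
  shows "monoid (Gal E F)"
proof (rule monoidI)
  fix \<sigma> \<tau> \<rho>
  assume s: "\<sigma> \<in> carrier (Gal E F)" and t: "\<tau> \<in> carrier (Gal E F)" and p: "\<rho> \<in> carrier (Gal E F)"
  then have sG: "\<sigma> \<in> Gal_set E F" and tG: "\<tau> \<in> Gal_set E F" by (simp_all add: Gal_def)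
  have "compose E \<sigma> \<tau> \<in> Gal_set E F"
    unfolding Gal_set_def
  proof (intro CollectI conjI ballI)
    show "compose E \<sigma> \<tau> \<in> E \<rightarrow>\<^sub>E E"
      using Gal_set_closed[OF sG] Gal_set_closed[OF tG] by (simp add: PiE_def Pi_iff compose_eq)
    show "bij_betw (compose E \<sigma> \<tau>) E E"
      using sG tG unfolding Gal_set_def by (blast intro: bij_betw_compose)
    show "compose E \<sigma> \<tau> 1 = 1"
      using subfield_1[OF E] by (simp add: compose_eq Gal_set_1[OF sG] Gal_set_1[OF tG])
    fix x assume x: "x \<in> E"
    { fix y assume y: "y \<in> E"
      show "compose E \<sigma> \<tau> (x + y) = compose E \<sigma> \<tau> x + compose E \<sigma> \<tau> y"
        using x y E
        by (simp add: compose_eq subfield_add Gal_set_add[OF tG] Gal_set_add[OF sG] Gal_set_closed[OF tG])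
      show "compose E \<sigma> \<tau> (x * y) = compose E \<sigma> \<tau> x * compose E \<sigma> \<tau> y"
        using x y E
        by (simp add: compose_eq subfield_mult Gal_set_mult[OF tG] Gal_set_mult[OF sG] Gal_set_closed[OF tG]) }
  next
    fix x assume "x \<in> F"
    then show "compose E \<sigma> \<tau> x = x"
      using FE sG tG unfolding Gal_set_def by (simp add: compose_eq subset_iff)
  qed
  then show "\<sigma> \<otimes>\<^bsub>Gal E F\<^esub> \<tau> \<in> carrier (Gal E F)" by (simp add: Gal_def)
  show "\<sigma> \<otimes>\<^bsub>Gal E F\<^esub> \<tau> \<otimes>\<^bsub>Gal E F\<^esub> \<rho> = \<sigma> \<otimes>\<^bsub>Gal E F\<^esub> (\<tau> \<otimes>\<^bsub>Gal E F\<^esub> \<rho>)"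
  proof -
    have "\<rho> \<in> E \<rightarrow> E" using p by (simp add: Gal_def Gal_set_def PiE_def)
    then show ?thesis by (simp add: Gal_def compose_assoc)
  qed
next
  show "\<one>\<^bsub>Gal E F\<^esub> \<in> carrier (Gal E F)"
    using E FE
    by (auto simp: Gal_def Gal_set_def subset_iff subfield_1 subfield_add subfield_mult bij_betw_def)
next
  fix \<sigma> assume "\<sigma> \<in> carrier (Gal E F)"
  then have "\<sigma> \<in> E \<rightarrow> E" "\<sigma> \<in> extensional E" by (simp_all add: Gal_def Gal_set_def PiE_def)
  then show "\<one>\<^bsub>Gal E F\<^esub> \<otimes>\<^bsub>Gal E F\<^esub> \<sigma> = \<sigma>" "\<sigma> \<otimes>\<^bsub>Gal E F\<^esub> \<one>\<^bsub>Gal E F\<^esub> = \<sigma>"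
    by (simp_all add: Gal_def Id_compose compose_Id)
qed

lemma (in monoid) square_eq_one_imp_commute:
  assumes sq: "\<And>x. x \<in> carrier G \<Longrightarrow> x \<otimes> x = \<one>"
    and x: "x \<in> carrier G" and y: "y \<in> carrier G"
  shows "x \<otimes> y = y \<otimes> x"
proof -
  have "y \<otimes> x = (x \<otimes> x) \<otimes> (y \<otimes> x) \<otimes> (y \<otimes> y)"
    using sq x y by simp
  also have "\<dots> = x \<otimes> ((x \<otimes> y) \<otimes> (x \<otimes> y)) \<otimes> y"
    using x y by (simp add: m_assoc)
  also have "\<dots> = x \<otimes> y"
    using sq x y by simp
  finally show ?thesis by simp
qed

lemma iso_square_eq_one:
  assumes G: "monoid G" and h: "h \<in> iso G H"
    and sq: "\<And>y. y \<in> carrier H \<Longrightarrow> y \<otimes>\<^bsub>H\<^esub> y = \<one>\<^bsub>H\<^esub>"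
    and x: "x \<in> carrier G"
  shows "x \<otimes>\<^bsub>G\<^esub> x = \<one>\<^bsub>G\<^esub>"
proof -
  have hom: "h \<in> hom G H" and inj: "inj_on h (carrier G)"
    using h by (auto simp: iso_iff)
  have one: "\<one>\<^bsub>G\<^esub> \<in> carrier G" "\<one>\<^bsub>G\<^esub> \<otimes>\<^bsub>G\<^esub> \<one>\<^bsub>G\<^esub> = \<one>\<^bsub>G\<^esub>"
    using G by (simp_all add: monoid.one_closed monoid.l_one)
  have "h (x \<otimes>\<^bsub>G\<^esub> x) = h (\<one>\<^bsub>G\<^esub> \<otimes>\<^bsub>G\<^esub> \<one>\<^bsub>G\<^esub>)"
    using hom_mult[OF hom x x] hom_mult[OF hom one(1) one(1)] sq hom x one(1)
    by (simp add: hom_in_carrier)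
  then show ?thesis
    using inj x one G by (simp add: inj_on_eq_iff monoid.m_closed)
qed

lemma Klein_four_square_eq_one:
  assumes "x \<in> carrier (integer_mod_group 2 \<times>\<times> integer_mod_group 2)"
  shows "x \<otimes>\<^bsub>integer_mod_group 2 \<times>\<times> integer_mod_group 2\<^esub> x
           = \<one>\<^bsub>integer_mod_group 2 \<times>\<times> integer_mod_group 2\<^esub>"
proof -
  obtain a b where "x = (a, b)" "a \<in> {0..<2}" "b \<in> {0..<2}"
    using assms by (auto simp: carrier_integer_mod_group)
  then show ?thesis by auto
qed

theorem corollary1:
  fixes F :: "'a::field set" and a1 a2 r1 r2 :: 'a and \<sigma>1 \<sigma>2 :: "'a \<Rightarrow> 'a"
  assumes subF: "is_subfield F"
    and char: "(2::'a) \<noteq> 0"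
    and a1: "a1 \<in> F" "a1 \<noteq> 0" and a2: "a2 \<in> F" "a2 \<noteq> 0"
    and r1: "r1 ^ 2 = a1" and r2: "r2 ^ 2 = a2"
    and gal: "is_galois (adjoin F {r1, r2}) F"
    and V4: "Gal (adjoin F {r1, r2}) F \<cong> (integer_mod_group 2 \<times>\<times> integer_mod_group 2)"
    and s1: "\<sigma>1 \<in> carrier (Gal (adjoin F {r1, r2}) F)" "\<sigma>1 r1 = r1" "\<sigma>1 r2 = - r2"
    and s2: "\<sigma>2 \<in> carrier (Gal (adjoin F {r1, r2}) F)" "\<sigma>2 r2 = r2" "\<sigma>2 r1 = - r1"
  shows "{e \<in> adjoin F {r1, r2} - {0}. e * \<sigma>1 (\<sigma>2 e) = \<sigma>1 e * \<sigma>2 e}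
       = {x * y | x y. x \<in> adjoin F {r1, r2} - {0} \<and> x / \<sigma>1 x = 1
                      \<and> y \<in> adjoin F {r1, r2} - {0} \<and> y / \<sigma>2 y = 1}"
proof -
  define E where "E = adjoin F {r1, r2}"
  have E: "is_subfield E" and FE: "F \<subseteq> E" and r1E: "r1 \<in> E"
    using is_subfield_adjoin adjoin_superset[where F = F and S = "{r1, r2}"] unfolding E_def by auto
  have monoid: "monoid (Gal E F)" using monoid_Gal[OF E FE] .
  obtain h where "h \<in> iso (Gal E F) (integer_mod_group 2 \<times>\<times> integer_mod_group 2)"
    using V4 unfolding E_def is_iso_def by blast
  then have sq: "\<And>\<sigma>. \<sigma> \<in> carrier (Gal E F) \<Longrightarrow> \<sigma> \<otimes>\<^bsub>Gal E F\<^esub> \<sigma> = \<one>\<^bsub>Gal E F\<^esub>"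
    using iso_square_eq_one[OF monoid] Klein_four_square_eq_one by blast
  have s1G: "\<sigma>1 \<in> carrier (Gal E F)" and s2G: "\<sigma>2 \<in> carrier (Gal E F)"
    using s1 s2 unfolding E_def by auto
  have invol: "\<sigma>2 (\<sigma>2 x) = x" if "x \<in> E" for x
    using sq[OF s2G] Gal_mult_apply[OF that] Gal_one_apply[OF that] by metis
  have commute: "\<sigma>1 (\<sigma>2 x) = \<sigma>2 (\<sigma>1 x)" if "x \<in> E" for x
    using monoid.square_eq_one_imp_commute[OF monoid sq s1G s2G] Gal_mult_apply[OF that] by metis
  have "\<sigma>1 \<in> Gal_set E F" "\<sigma>2 \<in> Gal_set E F"
    using s1G s2G by (simp_all add: Gal_def)
  moreover have "r1 \<noteq> 0" using r1 a1 by auto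
  ultimately show ?thesis
    using Gal_set_kernel_eq_product[OF E _ _ invol commute r1E _ s1(2) s2(3)] unfolding E_def by blast
qed

end
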